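(* Let $n\ge2$ and let $V$ be the potential of the planar $n$-body problem with all masses equal. Let $c\in\mathbb{R}^{2n}$ be the regular $n$-gon configuration $c_i=\alpha\cos\frac{2\pi(i-1)}n$, $c_{i+n}=\alpha\sin\frac{2\pi(i-1)}n$ ($i=1,\dots,n$), with $\alpha>0$ chosen so that $c$ is a Darboux point with multiplier $-1$. Let $v\in\mathbb{R}^{2n}$ be given by $v_i=\cos\frac{4\pi(i-1)}n$, $v_{i+n}=\sin\frac{4\pi(i-1)}n$. Then $Wv=J^{-1}WJv=\lambda v$ with $$\lambda=2-\frac{2\sin(\pi/n)}{1-\cos(\pi/n)}\Big(\sum_{j=1}^{n-1}\frac1{\sin(\pi j/n)}\Big)^{-1}.$$
   Context: Positions $q\in\mathbb{C}^{2n}$, body $i$ at $(q_i,q_{i+n})$, masses $m_i=m>0$ for all $i$ and $m_{i+n}:=m_i$. $V(q)=\sum_{i<j}\frac{m_im_j}{\sqrt{(q_i-q_j)^2+(q_{i+n}-q_{j+n})^2}}$. Darboux point with multiplier $-1$: $\partial V/\partial q_k(c)=-m_kc_k$ for all $k$. $W_{k,l}=\frac1{m_k}\frac{\partial^2V}{\partial q_k\partial q_l}(c)$. $J=\begin{pmatrix}0&-I_n\\ I_n&0\end{pmatrix}$. *)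

theory Defs
  imports "HOL-Analysis.Analysis"
begin

text \<open>Configurations in R^(2n) are functions nat => real, indices 0..2n-1 (0-based);
 body i (i < n) sits at (q i, q (i+n)). All masses equal m.\<close>

definition nbody_V :: "nat \<Rightarrow> real \<Rightarrow> (nat \<Rightarrow> real) \<Rightarrow> real" where
  "nbody_V n m q = (\<Sum>i<n. \<Sum>j\<in>{i<..<n}.
      m * m / sqrt ((q i - q j)^2 + (q (i+n) - q (j+n))^2))"

definition pdiff :: "nat \<Rightarrow> ((nat \<Rightarrow> real) \<Rightarrow> real) \<Rightarrow> (nat \<Rightarrow> real) \<Rightarrow> real" where
  "pdiff k f q = deriv (\<lambda>t. f (q(k := q k + t))) 0"

definition darboux_point :: "nat \<Rightarrow> real \<Rightarrow> (nat \<Rightarrow> real) \<Rightarrow> bool" where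
  "darboux_point n m c \<longleftrightarrow> (\<forall>k<2*n. pdiff k (nbody_V n m) c = - m * c k)"

definition Wmat :: "nat \<Rightarrow> real \<Rightarrow> (nat \<Rightarrow> real) \<Rightarrow> nat \<Rightarrow> nat \<Rightarrow> real" where
  "Wmat n m c k l = (1 / m) * pdiff k (\<lambda>p. pdiff l (nbody_V n m) p) c"

definition matvec :: "nat \<Rightarrow> (nat \<Rightarrow> nat \<Rightarrow> real) \<Rightarrow> (nat \<Rightarrow> real) \<Rightarrow> nat \<Rightarrow> real" where
  "matvec d A v k = (\<Sum>l<d. A k l * v l)"

text \<open>J = [[0,-I],[I,0]] and its inverse J^{-1} = [[0,I],[-I,0]], as (2n)x(2n) matrices.\<close>
definition Jmat :: "nat \<Rightarrow> nat \<Rightarrow> nat \<Rightarrow> real" where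
  "Jmat n k l = (if k < n \<and> l = k + n then -1 else if n \<le> k \<and> k < 2*n \<and> l = k - n then 1 else 0)"

definition Jinv :: "nat \<Rightarrow> nat \<Rightarrow> nat \<Rightarrow> real" where
  "Jinv n k l = (if k < n \<and> l = k + n then 1 else if n \<le> k \<and> k < 2*n \<and> l = k - n then -1 else 0)"

end

theory Submission
  imports Defs
begin

(* Place body b at alpha e^{i theta_b}, theta_b = 2 pi b/n, and let v be (A + iB) e^{2 i theta_b}
   at vertex b.  The Hessian of m^2/|P_a - P_b| maps a displacement u of body a to
   m^2 (3 X (X.u)/r^5 - u/r^3) with X = P_a - P_b and r = |X|, so (W v)_a is m times the sum of
   these kernels over the other vertices.  Seen from vertex a, the vertex at angular distance 2x
   spans a chord from psi - x to psi + x; then X = 2 alpha sin x (sin psi, -cos psi) and the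
   difference of the v-values is 2 sin 2x times (A + iB) e^{2 i psi} turned by -pi/2, so the
   contribution is cos x (P cos 2x + Q sin 2x + R) / sin^2 x with Q = v_a/(4 alpha^3).  Under
   k -> n - k the P- and R-parts cancel, and the Q-part sums to 2 Q (S - T) where
   S = sum_k 1/sin(pi k/n) and T = sum_k sin(pi k/n) = sin(pi/n)/(1 - cos(pi/n)).  Hence
   W v = m (S - T)/(2 alpha^3) v.  The same computation for the gradient turns the Darboux
   condition into S = 4 alpha^3/m, which gives the eigenvalue 2 - 2T/S.  Finally J v is the
   mode for i(A + iB), so J^-1 W J v = lambda v too. *)

section \<open>Derivatives of the Newtonian potential\<close>

lemma has_real_derivative_inverse_norm:
  fixes A B a b M :: real
  assumes "A^2 + B^2 > 0"
  shows "((\<lambda>t. M / sqrt ((A + t*a)^2 + (B + t*b)^2)) has_real_derivative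
          - M * (A*a + B*b) / sqrt (A^2 + B^2)^3) (at 0)"
proof -
  define R where "R = sqrt (A^2 + B^2)"
  have R: "R > 0" "A^2 + B^2 = R^2" using assms by (auto simp: R_def)
  show ?thesis
    using assms by (auto intro!: derivative_eq_intros simp: R_def[symmetric] R(2) field_simps)
       (simp_all add: R abs_of_pos power2_eq_square power3_eq_cube field_simps)
qed

lemma has_real_derivative_coord_inverse_norm_cube:
  fixes A B a b M X e :: real
  assumes "A^2 + B^2 > 0"
  shows "((\<lambda>t. M * ((X + t*e) / sqrt ((A + t*a)^2 + (B + t*b)^2)^3)) has_real_derivative
          M * (e / sqrt (A^2 + B^2)^3 - 3 * X * (A*a + B*b) / sqrt (A^2 + B^2)^5)) (at 0)"
proof -
  define R where "R = sqrt (A^2 + B^2)"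
  have R: "R > 0" "A^2 + B^2 = R^2" using assms by (auto simp: R_def)
  show ?thesis
    using assms by (auto intro!: derivative_eq_intros simp: R_def[symmetric] R(2) field_simps)
       (simp_all add: R abs_of_pos eval_nat_numeral field_simps)
qed

definition sqdist :: "nat \<Rightarrow> (nat \<Rightarrow> real) \<Rightarrow> nat \<Rightarrow> nat \<Rightarrow> real" where
  "sqdist n p a b = (p a - p b)^2 + (p (a+n) - p (b+n))^2"

definition collision_free :: "nat \<Rightarrow> (nat \<Rightarrow> real) \<Rightarrow> bool" where
  "collision_free n p \<longleftrightarrow> (\<forall>a<n. \<forall>b<n. a \<noteq> b \<longrightarrow> sqdist n p a b > 0)"

lemma sqdist_commute: "sqdist n p a b = sqdist n p b a"
  by (simp add: sqdist_def power2_commute)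

lemma sum_offdiag_symmetric:
  fixes g :: "nat \<Rightarrow> nat \<Rightarrow> 'a::comm_semiring_1"
  assumes "\<And>a b. g a b = g b a"
  shows "(\<Sum>a<n. \<Sum>b\<in>{..<n}-{a}. g a b) = 2 * (\<Sum>a<n. \<Sum>b\<in>{a<..<n}. g a b)"
proof -
  have split: "(\<Sum>b\<in>{..<n}-{a}. g a b) = (\<Sum>b\<in>{a<..<n}. g a b) + (\<Sum>b<a. g a b)" if "a < n" for a
  proof -
    have "{..<n}-{a} = {a<..<n} \<union> {..<a}"
      using that by auto
    moreover have "(\<Sum>b\<in>{a<..<n} \<union> {..<a}. g a b) = (\<Sum>b\<in>{a<..<n}. g a b) + (\<Sum>b<a. g a b)"
      by (rule sum.union_disjoint) auto
    ultimately show ?thesis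
      by (simp only:)
  qed
  have "(\<Sum>a<n. \<Sum>b<a. g a b) = (\<Sum>a<n. \<Sum>b\<in>{b\<in>{..<n}. b < a}. g a b)"
    by (intro sum.cong) auto
  also have "\<dots> = (\<Sum>b<n. \<Sum>a\<in>{a\<in>{..<n}. b < a}. g a b)"
    by (rule sum.swap_restrict) auto
  also have "\<dots> = (\<Sum>a<n. \<Sum>b\<in>{a<..<n}. g a b)"
    by (intro sum.cong) (auto simp: assms)
  finally show ?thesis
    by (simp add: split sum.distrib mult_2)
qed

lemma nbody_V_pair_sum:
  "nbody_V n m p = (\<Sum>a<n. \<Sum>b\<in>{..<n}-{a}. m*m / sqrt (sqdist n p a b)) / 2"
  by (subst sum_offdiag_symmetric) (auto simp: nbody_V_def sqdist_def sqdist_commute[unfolded sqdist_def])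

lemma sum_offdiag_delta:
  fixes F :: "nat \<Rightarrow> nat \<Rightarrow> 'a::comm_ring_1"
  assumes "i < n"
  shows "(\<Sum>a<n. \<Sum>b\<in>{..<n}-{a}. (of_bool (a = i) - of_bool (b = i)) * F a b)
       = (\<Sum>b\<in>{..<n}-{i}. F i b - F b i)"
proof -
  have "(\<Sum>a<n. \<Sum>b\<in>{..<n}-{a}. of_bool (a = i) * F a b) = (\<Sum>b\<in>{..<n}-{i}. F i b)"
    using assms by (simp add: sum.delta if_distrib cong: if_cong)
  moreover have "(\<Sum>a<n. \<Sum>b\<in>{..<n}-{a}. of_bool (b = i) * F a b) = (\<Sum>a\<in>{..<n}-{i}. F a i)"
  proof -
    have "(\<Sum>b\<in>{..<n}-{a}. of_bool (b = i) * F a b) = of_bool (a \<noteq> i) * F a i" if "a < n" for a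
      using assms that by (simp add: if_distrib sum.delta' cong: if_cong)
    then have "(\<Sum>a<n. \<Sum>b\<in>{..<n}-{a}. of_bool (b = i) * F a b) = (\<Sum>a<n. of_bool (a \<noteq> i) * F a i)"
      by simp
    also have "\<dots> = (\<Sum>a\<in>{..<n}-{i}. F a i)"
      by (simp add: if_distrib sum.If_cases Diff_eq Collect_neg_eq)
    finally show ?thesis .
  qed
  ultimately show ?thesis
    by (simp add: left_diff_distrib sum_subtractf)
qed

lemma sqdist_fun_upd_add:
  "sqdist n (p(k := p k + t)) a b =
     (p a - p b + t * (of_bool (a = k) - of_bool (b = k)))^2
   + (p (a+n) - p (b+n) + t * (of_bool (a+n = k) - of_bool (b+n = k)))^2"
  by (simp add: sqdist_def algebra_simps)

lemma pdiff_nbody_V: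
  assumes p: "collision_free n p" and i: "i < n" and s: "s \<in> {0, n}"
  shows "pdiff (i+s) (nbody_V n m) p
       = - (m*m) * (\<Sum>b\<in>{..<n}-{i}. (p (i+s) - p (b+s)) / sqrt (sqdist n p i b)^3)"
proof -
  define F where "F a b = - (m*m) * (p (a+s) - p (b+s)) / sqrt (sqdist n p a b)^3" for a b
  have F_antisym: "F b a = - F a b" for a b
    unfolding F_def sqdist_commute[of n p b] by (simp add: field_split_simps)
  have pair_deriv: "((\<lambda>t. m*m / sqrt (sqdist n (p(i+s := p (i+s) + t)) a b)) has_real_derivative
      (of_bool (a = i) - of_bool (b = i)) * F a b) (at 0)" if "a \<in> {..<n}" "b \<in> {..<n}-{a}" for a b
    unfolding sqdist_fun_upd_add
  proof (rule DERIV_cong[OF has_real_derivative_inverse_norm])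
    show "(p a - p b)^2 + (p (a+n) - p (b+n))^2 > 0"
      using p that by (auto simp: collision_free_def sqdist_def)
    show "- (m*m) * ((p a - p b) * (of_bool (a = i+s) - of_bool (b = i+s))
          + (p (a+n) - p (b+n)) * (of_bool (a+n = i+s) - of_bool (b+n = i+s)))
          / sqrt ((p a - p b)^2 + (p (a+n) - p (b+n))^2)^3
        = (of_bool (a = i) - of_bool (b = i)) * F a b"
      using that i s by (auto simp: F_def sqdist_def)
  qed
  have "((\<lambda>t. nbody_V n m (p(i+s := p (i+s) + t))) has_real_derivative
      (\<Sum>a<n. \<Sum>b\<in>{..<n}-{a}. (of_bool (a = i) - of_bool (b = i)) * F a b) / 2) (at 0)"
    unfolding nbody_V_pair_sum by (intro DERIV_cdivide DERIV_sum pair_deriv)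
  then have "pdiff (i+s) (nbody_V n m) p
      = (\<Sum>a<n. \<Sum>b\<in>{..<n}-{a}. (of_bool (a = i) - of_bool (b = i)) * F a b) / 2"
    unfolding pdiff_def by (rule DERIV_imp_deriv)
  also have "\<dots> = (\<Sum>b\<in>{..<n}-{i}. 2 * F i b) / 2"
    unfolding sum_offdiag_delta[OF i] using F_antisym[where a = i] by simp
  also have "\<dots> = (\<Sum>b\<in>{..<n}-{i}. F i b)"
    by (simp add: sum_distrib_left[symmetric])
  finally show ?thesis
    by (simp add: F_def sum_distrib_left)
qed

lemma eventually_collision_free_fun_upd_add:
  assumes "collision_free n p"
  shows "\<forall>\<^sub>F t in nhds 0. collision_free n (p(k := p k + t))"
proof -
  have "\<forall>\<^sub>F t in nhds 0. sqdist n (p(k := p k + t)) a b > 0" if "a < n" "b < n" "a \<noteq> b" for a b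
  proof (rule order_tendstoD(1))
    let ?f = "\<lambda>t. sqdist n (p(k := p k + t)) a b"
    have "(?f \<longlongrightarrow> ?f 0) (nhds 0)"
      unfolding sqdist_fun_upd_add by (intro tendsto_intros filterlim_ident)
    then show "(?f \<longlongrightarrow> sqdist n p a b) (nhds 0)"
      by simp
    show "0 < sqdist n p a b"
      using assms that by (simp add: collision_free_def)
  qed
  then have "\<forall>\<^sub>F t in nhds 0. \<forall>a\<in>{..<n}. \<forall>b\<in>{..<n}.
      a \<noteq> b \<longrightarrow> sqdist n (p(k := p k + t)) a b > 0"
    by (intro eventually_ball_finite ballI) (auto elim: eventually_mono)
  then show ?thesis
    unfolding collision_free_def by (rule eventually_mono) auto
qed

lemma fun_upd_add_coord:
  fixes p :: "nat \<Rightarrow> real"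
  assumes "a < n" "i < n" "s \<in> {0, n}" "\<sigma> \<in> {0, n}"
  shows "(p(i+\<sigma> := p (i+\<sigma>) + t)) (a+s) = p (a+s) + t * (of_bool (a = i) * of_bool (s = \<sigma>))"
  using assms by auto

definition pair_hessian ::
    "nat \<Rightarrow> (nat \<Rightarrow> real) \<Rightarrow> nat \<Rightarrow> nat \<Rightarrow> nat \<Rightarrow> nat \<Rightarrow> real" where
  "pair_hessian n p a b s \<sigma> =
     3 * (p (a+s) - p (b+s)) * (p (a+\<sigma>) - p (b+\<sigma>)) / sqrt (sqdist n p a b)^5
     - of_bool (s = \<sigma>) / sqrt (sqdist n p a b)^3"

lemma pair_hessian_commute: "pair_hessian n p a b s \<sigma> = pair_hessian n p b a s \<sigma>"
  by (simp add: pair_hessian_def sqdist_commute[of n p a] algebra_simps)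

lemma pdiff_pdiff_nbody_V:
  fixes p :: "nat \<Rightarrow> real"
  assumes p: "collision_free n p" and i: "i < n" and j: "j < n" and \<sigma>: "\<sigma> \<in> {0, n}" and s: "s \<in> {0, n}"
  shows "pdiff (i+\<sigma>) (pdiff (j+s) (nbody_V n m)) p
       = m*m * (\<Sum>b\<in>{..<n}-{j}. (of_bool (j = i) - of_bool (b = i)) * pair_hessian n p j b s \<sigma>)"
proof -
  let ?q = "\<lambda>t. p(i+\<sigma> := p (i+\<sigma>) + t)"
  define d :: "nat \<Rightarrow> real" where "d b = of_bool (j = i) - of_bool (b = i)" for b
  define H where "H b = pair_hessian n p j b s \<sigma>" for b
  define G where "G q = - (m*m) * (\<Sum>b\<in>{..<n}-{j}. (q (j+s) - q (b+s)) / sqrt (sqdist n q j b)^3)" for q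
  have "\<forall>\<^sub>F t in nhds 0. pdiff (j+s) (nbody_V n m) (?q t) = G (?q t)"
    using eventually_collision_free_fun_upd_add[OF p]
    unfolding G_def by eventually_elim (rule pdiff_nbody_V[OF _ j s])
  then have "pdiff (i+\<sigma>) (pdiff (j+s) (nbody_V n m)) p = deriv (\<lambda>t. G (?q t)) 0"
    unfolding pdiff_def by (rule deriv_cong_ev) simp
  also have "\<dots> = m*m * (\<Sum>b\<in>{..<n}-{j}. d b * H b)"
  proof (rule DERIV_imp_deriv)
    have path: "?q t (a + s') = p (a+s') + t * (of_bool (a = i) * of_bool (s' = \<sigma>))"
      if "a < n" "s' \<in> {0, n}" for a s' t
      by (rule fun_upd_add_coord[OF that(1) i that(2) \<sigma>])
    have "((\<lambda>t. - (m*m) * ((?q t (j+s) - ?q t (b+s)) / sqrt (sqdist n (?q t) j b)^3))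
        has_real_derivative m*m * (d b * H b)) (at 0)" if b: "b \<in> {..<n}-{j}" for b
    proof -
      have path_diff: "?q t (j+s) - ?q t (b+s) = (p (j+s) - p (b+s)) + t * (d b * of_bool (s = \<sigma>))" for t
        using path[of j s t] path[of b s t] j b s by (simp add: d_def algebra_simps)
      have path_sqdist: "sqdist n (?q t) j b = ((p j - p b) + t * (d b * of_bool (0 = \<sigma>)))^2
                            + ((p (j+n) - p (b+n)) + t * (d b * of_bool (n = \<sigma>)))^2" for t
        using path[of j 0 t] path[of b 0 t] path[of j n t] path[of b n t] j b
        by (simp add: sqdist_def d_def algebra_simps)
      show ?thesis
        unfolding path_diff path_sqdist
      proof (rule DERIV_cong[OF has_real_derivative_coord_inverse_norm_cube])
        show "(p j - p b)^2 + (p (j+n) - p (b+n))^2 > 0"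
          using p j b by (auto simp: collision_free_def sqdist_def)
        have "(p j - p b) * (d b * of_bool (0 = \<sigma>)) + (p (j+n) - p (b+n)) * (d b * of_bool (n = \<sigma>))
            = d b * (p (j+\<sigma>) - p (b+\<sigma>))"
          using \<sigma> j by auto
        then show "- (m*m) * (d b * of_bool (s = \<sigma>) / sqrt ((p j - p b)^2 + (p (j+n) - p (b+n))^2)^3
            - 3 * (p (j+s) - p (b+s))
              * ((p j - p b) * (d b * of_bool (0 = \<sigma>)) + (p (j+n) - p (b+n)) * (d b * of_bool (n = \<sigma>)))
              / sqrt ((p j - p b)^2 + (p (j+n) - p (b+n))^2)^5)
          = m*m * (d b * H b)"
          by (simp only:) (simp add: H_def pair_hessian_def sqdist_def field_simps)
      qed
    qed
    then show "((\<lambda>t. G (?q t)) has_real_derivative m*m * (\<Sum>b\<in>{..<n}-{j}. d b * H b)) (at 0)"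
      unfolding G_def sum_distrib_left by (rule DERIV_sum)
  qed
  finally show ?thesis
    by (simp add: d_def H_def)
qed

section \<open>The Hessian acting on a configuration vector\<close>

lemma sum_lessThan_add: "(\<Sum>l<m+k. f l) = (\<Sum>l<m. f l) + (\<Sum>l<k. f (l+m))" for m k :: nat
  by (induct k) (simp_all add: add_ac)

text \<open>\<open>inv_norm_hessian x y u w\<close> is the first component of the Hessian of \<open>1/|(x, y)|\<close>
  applied to \<open>(u, w)\<close>; the second component is \<open>inv_norm_hessian y x w u\<close>.\<close>

definition inv_norm_hessian :: "real \<Rightarrow> real \<Rightarrow> real \<Rightarrow> real \<Rightarrow> real" where
  "inv_norm_hessian x y u w = 3 * x * (x*u + y*w) / sqrt (x^2 + y^2)^5 - u / sqrt (x^2 + y^2)^3"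

lemma matvec_Wmat:
  fixes p v :: "nat \<Rightarrow> real"
  assumes p: "collision_free n p" and i: "i < n" and \<sigma>\<tau>: "{\<sigma>, \<tau>} = {0, n}"
  shows "matvec (2*n) (Wmat n m p) v (i+\<sigma>) = m * (\<Sum>b\<in>{..<n}-{i}.
           inv_norm_hessian (p (i+\<sigma>) - p (b+\<sigma>)) (p (i+\<tau>) - p (b+\<tau>))
             (v (i+\<sigma>) - v (b+\<sigma>)) (v (i+\<tau>) - v (b+\<tau>)))"
proof -
  have \<sigma>: "\<sigma> \<in> {0, n}"
    using \<sigma>\<tau> by blast
  have block: "(\<Sum>j<n. Wmat n m p (i+\<sigma>) (j+s) * v (j+s))
      = m * (\<Sum>b\<in>{..<n}-{i}. (v (i+s) - v (b+s)) * pair_hessian n p i b s \<sigma>)" if s: "s \<in> {0, n}" for s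
  proof -
    have "(\<Sum>j<n. Wmat n m p (i+\<sigma>) (j+s) * v (j+s))
        = m * (\<Sum>j<n. \<Sum>b\<in>{..<n}-{j}.
                 (of_bool (j = i) - of_bool (b = i)) * (v (j+s) * pair_hessian n p j b s \<sigma>))"
      by (cases "m = 0")
        (simp_all add: Wmat_def pdiff_pdiff_nbody_V[OF p i _ \<sigma> s] sum_distrib_left sum_distrib_right mult_ac)
    also have "\<dots> = m * (\<Sum>b\<in>{..<n}-{i}. (v (i+s) - v (b+s)) * pair_hessian n p i b s \<sigma>)"
      by (subst sum_offdiag_delta[OF i]) (simp add: pair_hessian_commute[of n p _ i] left_diff_distrib)
    finally show ?thesis .
  qed
  have "matvec (2*n) (Wmat n m p) v (i+\<sigma>)
      = (\<Sum>j<n. Wmat n m p (i+\<sigma>) (j+0) * v (j+0)) + (\<Sum>j<n. Wmat n m p (i+\<sigma>) (j+n) * v (j+n))"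
    by (simp add: matvec_def mult_2 sum_lessThan_add)
  also have "\<dots> = m * (\<Sum>b\<in>{..<n}-{i}.
      (v i - v b) * pair_hessian n p i b 0 \<sigma> + (v (i+n) - v (b+n)) * pair_hessian n p i b n \<sigma>)"
    using block[of 0] block[of n] by (simp add: sum.distrib distrib_left)
  also have "\<dots> = m * (\<Sum>b\<in>{..<n}-{i}.
           inv_norm_hessian (p (i+\<sigma>) - p (b+\<sigma>)) (p (i+\<tau>) - p (b+\<tau>))
             (v (i+\<sigma>) - v (b+\<sigma>)) (v (i+\<tau>) - v (b+\<tau>)))"
  proof -
    have "(\<sigma> = 0 \<and> \<tau> = n) \<or> (\<sigma> = n \<and> \<tau> = 0)"
      using \<sigma>\<tau> i by (auto simp: doubleton_eq_iff)
    then have "(v i - v b) * pair_hessian n p i b 0 \<sigma> + (v (i+n) - v (b+n)) * pair_hessian n p i b n \<sigma>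
        = inv_norm_hessian (p (i+\<sigma>) - p (b+\<sigma>)) (p (i+\<tau>) - p (b+\<tau>))
            (v (i+\<sigma>) - v (b+\<sigma>)) (v (i+\<tau>) - v (b+\<tau>))" for b
      using i by (auto simp: pair_hessian_def inv_norm_hessian_def sqdist_def add.commute
          diff_divide_distrib add_divide_distrib algebra_simps)
    then show ?thesis by simp
  qed
  finally show ?thesis .
qed

section \<open>Modes and chords on the circle\<close>

text \<open>\<open>(mode_x A B \<theta>, mode_y A B \<theta>)\<close> is \<open>(A + iB) exp (2i\<theta>)\<close>; the eigenvector \<open>v\<close>
  of the theorem is the case \<open>(1, 0)\<close> and \<open>J v\<close> the case \<open>(0, 1)\<close>.\<close>

definition mode_x :: "real \<Rightarrow> real \<Rightarrow> real \<Rightarrow> real" where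
  "mode_x A B \<theta> = A * cos (2*\<theta>) - B * sin (2*\<theta>)"

definition mode_y :: "real \<Rightarrow> real \<Rightarrow> real \<Rightarrow> real" where
  "mode_y A B \<theta> = A * sin (2*\<theta>) + B * cos (2*\<theta>)"

lemma mode_periodic:
  "mode_x A B (\<theta> + 2*pi) = mode_x A B \<theta>" "mode_y A B (\<theta> + 2*pi) = mode_y A B \<theta>"
proof -
  have "2 * (\<theta> + 2*pi) = (2*\<theta> + 2*pi) + 2*pi" by simp
  then show "mode_x A B (\<theta> + 2*pi) = mode_x A B \<theta>" "mode_y A B (\<theta> + 2*pi) = mode_y A B \<theta>"
    by (simp_all only: mode_x_def mode_y_def sin_periodic cos_periodic)
qed

lemma mode_add:
  "mode_x A B (\<theta> + x) = mode_x A B \<theta> * cos (2*x) - mode_y A B \<theta> * sin (2*x)"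
  "mode_y A B (\<theta> + x) = mode_y A B \<theta> * cos (2*x) + mode_x A B \<theta> * sin (2*x)"
  by (simp_all add: mode_x_def mode_y_def distrib_left cos_add sin_add algebra_simps)

lemma mode_chord:
  "mode_x A B (\<psi> - x) - mode_x A B (\<psi> + x) = 2 * sin (2*x) * mode_y A B \<psi>"
  "mode_y A B (\<psi> - x) - mode_y A B (\<psi> + x) = - 2 * sin (2*x) * mode_x A B \<psi>"
  by (simp_all add: mode_x_def mode_y_def right_diff_distrib distrib_left cos_add sin_add cos_diff sin_diff algebra_simps)

lemma circle_chord:
  fixes \<psi> x :: real
  shows "cos (\<psi> - x) - cos (\<psi> + x) = 2 * sin x * sin \<psi>"
  "sin (\<psi> - x) - sin (\<psi> + x) = - 2 * sin x * cos \<psi>"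
  by (simp_all add: cos_add sin_add cos_diff sin_diff)

lemma chord_sqdist:
  fixes \<alpha> a b :: real
  shows "(\<alpha> * cos a - \<alpha> * cos b)^2 + (\<alpha> * sin a - \<alpha> * sin b)^2
       = (2 * \<alpha> * sin ((a - b)/2))^2"
proof -
  have "cos (a - b) = cos (2 * ((a - b)/2))"
    by (rule arg_cong[where f = cos]) simp
  also have "\<dots> = 1 - 2 * sin ((a - b)/2)^2"
    by (rule cos_double_sin)
  finally have "cos (a - b) = 1 - 2 * sin ((a - b)/2)^2" .
  then show ?thesis
    using sin_cos_squared_add[of a] sin_cos_squared_add[of b] unfolding cos_diff by algebra
qed

lemma mode_projection:
  "sin \<psi> * mode_y A B \<psi> + cos \<psi> * mode_x A B \<psi> = A * cos \<psi> - B * sin \<psi>"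
  "3 * sin \<psi> * (A * cos \<psi> - B * sin \<psi>) - mode_y A B \<psi> = (mode_y A B \<psi> - 3 * B) / 2"
  "3 * cos \<psi> * (A * cos \<psi> - B * sin \<psi>) - mode_x A B \<psi> = (mode_x A B \<psi> + 3 * A) / 2"
proof -
  have sc: "sin \<psi>^2 + cos \<psi>^2 = 1" by simp
  show "sin \<psi> * mode_y A B \<psi> + cos \<psi> * mode_x A B \<psi> = A * cos \<psi> - B * sin \<psi>"
    "3 * sin \<psi> * (A * cos \<psi> - B * sin \<psi>) - mode_y A B \<psi> = (mode_y A B \<psi> - 3 * B) / 2"
    "3 * cos \<psi> * (A * cos \<psi> - B * sin \<psi>) - mode_x A B \<psi> = (mode_x A B \<psi> + 3 * A) / 2"
    unfolding mode_x_def mode_y_def sin_double cos_double using sc by algebra+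
qed

lemma inv_norm_hessian_scale:
  assumes "r > 0" "e\<^sub>1^2 + e\<^sub>2^2 = 1"
  shows "inv_norm_hessian (r * e\<^sub>1) (r * e\<^sub>2) u w = (3 * e\<^sub>1 * (e\<^sub>1 * u + e\<^sub>2 * w) - u) / r^3"
proof -
  have "sqrt ((r * e\<^sub>1)^2 + (r * e\<^sub>2)^2) = r"
    using assms by (simp add: power_mult_distrib flip: distrib_left)
  then show ?thesis
    using assms(1) by (simp add: inv_norm_hessian_def field_simps eval_nat_numeral)
qed

lemma inv_norm_hessian_polygon_pair:
  fixes \<alpha> A B \<theta> x :: real
  assumes \<alpha>: "\<alpha> > 0" and x: "sin x > 0"
  shows "inv_norm_hessian
           (\<alpha> * cos \<theta> - \<alpha> * cos (\<theta> + 2*x)) (\<alpha> * sin \<theta> - \<alpha> * sin (\<theta> + 2*x))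
           (mode_x A B \<theta> - mode_x A B (\<theta> + 2*x)) (mode_y A B \<theta> - mode_y A B (\<theta> + 2*x))
         = cos x * (mode_y A B (\<theta> + x) - 3 * B) / (4 * \<alpha>^3 * sin x ^ 2)" (is "?h\<^sub>x = ?r\<^sub>x")
    and "inv_norm_hessian
           (\<alpha> * sin \<theta> - \<alpha> * sin (\<theta> + 2*x)) (\<alpha> * cos \<theta> - \<alpha> * cos (\<theta> + 2*x))
           (mode_y A B \<theta> - mode_y A B (\<theta> + 2*x)) (mode_x A B \<theta> - mode_x A B (\<theta> + 2*x))
         = - cos x * (mode_x A B (\<theta> + x) + 3 * A) / (4 * \<alpha>^3 * sin x ^ 2)" (is "?h\<^sub>y = ?r\<^sub>y")
proof -
  define \<psi> where "\<psi> = \<theta> + x"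
  have \<theta>: "\<theta> = \<psi> - x" "\<theta> + 2*x = \<psi> + x"
    by (simp_all add: \<psi>_def)
  have r: "2 * \<alpha> * sin x > 0"
    using \<alpha> x by simp
  have X: "\<alpha> * cos \<theta> - \<alpha> * cos (\<theta> + 2*x) = (2 * \<alpha> * sin x) * sin \<psi>"
          "\<alpha> * sin \<theta> - \<alpha> * sin (\<theta> + 2*x) = (2 * \<alpha> * sin x) * - cos \<psi>"
    by (simp only: \<theta>(2), simp only: \<theta>(1), simp add: right_diff_distrib[symmetric] circle_chord)+
  have U: "mode_x A B \<theta> - mode_x A B (\<theta> + 2*x) = 2 * sin (2*x) * mode_y A B \<psi>"
          "mode_y A B \<theta> - mode_y A B (\<theta> + 2*x) = - 2 * sin (2*x) * mode_x A B \<psi>"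
    by (simp only: \<theta>(2), simp only: \<theta>(1), simp add: mode_chord)+
  have r3: "(2 * \<alpha> * sin x)^3 = 4 * \<alpha>^3 * sin x^2 * (2 * sin x)"
    by (simp add: power_mult_distrib eval_nat_numeral)
  have s2: "sin (2*x) = 2 * sin x * cos x"
    by (rule sin_double)
  have unit: "(sin \<psi>)^2 + (- cos \<psi>)^2 = 1" "(- cos \<psi>)^2 + (sin \<psi>)^2 = 1"
    by simp_all
  have "?h\<^sub>x = 2 * sin (2*x)
      * (3 * sin \<psi> * (sin \<psi> * mode_y A B \<psi> + cos \<psi> * mode_x A B \<psi>) - mode_y A B \<psi>) / (2 * \<alpha> * sin x)^3"
    unfolding X U inv_norm_hessian_scale[OF r unit(1)]
    by (simp add: algebra_simps)
  also have "\<dots> = ?r\<^sub>x"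
    unfolding mode_projection r3 s2 \<psi>_def[symmetric] using x \<alpha> by (simp add: field_simps)
  finally show "?h\<^sub>x = ?r\<^sub>x" .
  have "?h\<^sub>y = - 2 * sin (2*x)
      * (3 * cos \<psi> * (sin \<psi> * mode_y A B \<psi> + cos \<psi> * mode_x A B \<psi>) - mode_x A B \<psi>) / (2 * \<alpha> * sin x)^3"
    unfolding X U inv_norm_hessian_scale[OF r unit(2)]
    by (simp add: algebra_simps)
  also have "\<dots> = ?r\<^sub>y"
    unfolding mode_projection r3 s2 \<psi>_def[symmetric] using x \<alpha> by (simp add: field_simps)
  finally show "?h\<^sub>y = ?r\<^sub>y" .
qed

section \<open>Sums over the vertices\<close>

lemma sum_sin_multiples:
  fixes x :: real
  shows "2 * sin (x/2) * (\<Sum>k=1..N. sin (real k * x)) = cos (x/2) - cos ((real N + 1/2) * x)"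
proof (induction N)
  case 0
  then show ?case by simp
next
  case (Suc N)
  have "2 * sin (x/2) * sin (real (Suc N) * x) = cos ((real N + 1/2) * x) - cos ((real (Suc N) + 1/2) * x)"
  proof -
    have "(real N + 1/2) * x = real (Suc N) * x - x/2" "(real (Suc N) + 1/2) * x = real (Suc N) * x + x/2"
      by (simp_all add: algebra_simps)
    then show ?thesis
      by (simp add: cos_diff cos_add)
  qed
  with Suc show ?case
    by (simp add: distrib_left)
qed

lemma sum_sin_pi_div:
  assumes "n \<ge> 2"
  shows "(\<Sum>k=1..n-1. sin (pi * real k / real n)) = sin (pi / real n) / (1 - cos (pi / real n))"
proof -
  define x where "x = pi / real n"
  have "0 < x" "x < pi"
    using assms by (auto simp: x_def field_simps)
  then have s: "sin (x/2) > 0"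
    by (intro sin_gt_zero) auto
  have "(real (n-1) + 1/2) * x = pi - x/2"
    using assms by (simp add: x_def of_nat_diff field_simps)
  then have "2 * sin (x/2) * (\<Sum>k=1..n-1. sin (real k * x)) = 2 * cos (x/2)"
    using sum_sin_multiples[of x "n-1"] by simp
  then have "(\<Sum>k=1..n-1. sin (real k * x)) = cos (x/2) / sin (x/2)"
    using s by (simp add: field_simps)
  also have "\<dots> = sin x / (1 - cos x)"
  proof -
    have sx: "sin x = 2 * sin (x/2) * cos (x/2)" and cx: "1 - cos x = 2 * sin (x/2)^2"
      using sin_double[of "x/2"] cos_double_sin[of "x/2"] by simp_all
    show ?thesis
      unfolding sx cx using s by (simp add: field_simps power2_eq_square)
  qed
  finally show ?thesis
    by (simp add: x_def mult.commute)
qed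

lemma sum_reflect_eq_zero:
  fixes h :: "nat \<Rightarrow> real"
  assumes "\<And>k. 1 \<le> k \<Longrightarrow> k \<le> n - 1 \<Longrightarrow> h (n - k) = - h k"
  shows "(\<Sum>k=1..n-1. h k) = 0"
proof -
  have "(\<Sum>k=1..n-1. h k) = (\<Sum>k=1..n-1. h (n - 1 + 1 - k))"
    by (rule sum.atLeastAtMost_rev)
  also have "\<dots> = (\<Sum>k=1..n-1. - h k)"
  proof (rule sum.cong)
    fix k assume "k \<in> {1..n-1}"
    moreover from this have "n - 1 + 1 - k = n - k" by auto
    ultimately show "h (n - 1 + 1 - k) = - h k" using assms by simp
  qed simp
  also have "\<dots> = - (\<Sum>k=1..n-1. h k)"
    by (rule sum_negf)
  finally show ?thesis
    by simp
qed

lemma sum_chord_weights: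
  assumes n: "n \<ge> 2"
  shows "(\<Sum>k=1..n-1. cos (pi * real k / real n) * (P * cos (2 * (pi * real k / real n))
             + Q * sin (2 * (pi * real k / real n)) + R) / sin (pi * real k / real n)^2)
       = 2 * Q * ((\<Sum>k=1..n-1. 1 / sin (pi * real k / real n)) - sin (pi / real n) / (1 - cos (pi / real n)))"
proof -
  define x where "x k = pi * real k / real n" for k
  have sin_pos: "sin (x k) > 0" if "k \<in> {1..n-1}" for k
    using that n by (intro sin_gt_zero) (auto simp: x_def field_simps)
  have "(\<Sum>k=1..n-1. cos (x k) * (P * cos (2 * x k) + R) / sin (x k)^2) = 0"
  proof (rule sum_reflect_eq_zero)
    fix k assume "1 \<le> k" "k \<le> n - 1"
    then have "x (n - k) = pi - x k"
      by (simp add: x_def of_nat_diff field_simps)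
    then show "cos (x (n - k)) * (P * cos (2 * x (n - k)) + R) / sin (x (n - k))^2
        = - (cos (x k) * (P * cos (2 * x k) + R) / sin (x k)^2)"
      by (simp add: right_diff_distrib cos_diff)
  qed
  moreover have "cos (x k) * (P * cos (2 * x k) + Q * sin (2 * x k) + R) / sin (x k)^2
      = 2 * Q * (1 / sin (x k) - sin (x k)) + cos (x k) * (P * cos (2 * x k) + R) / sin (x k)^2"
    if "k \<in> {1..n-1}" for k
  proof -
    have "cos (x k) * (P * cos (2 * x k) + Q * sin (2 * x k) + R) / sin (x k)^2
        = Q * (cos (x k) * sin (2 * x k) / sin (x k)^2) + cos (x k) * (P * cos (2 * x k) + R) / sin (x k)^2"
      using sin_pos[OF that] by (simp add: field_simps)
    also have "cos (x k) * sin (2 * x k) / sin (x k)^2 = 2 * cos (x k)^2 / sin (x k)"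
      unfolding sin_double using sin_pos[OF that] by (simp add: field_simps power2_eq_square)
    also have "\<dots> = 2 * (1 / sin (x k) - sin (x k))"
      unfolding cos_squared_eq using sin_pos[OF that] by (simp add: field_simps power2_eq_square)
    finally show ?thesis
      by simp
  qed
  ultimately have "(\<Sum>k=1..n-1. cos (x k) * (P * cos (2 * x k) + Q * sin (2 * x k) + R) / sin (x k)^2)
      = 2 * Q * ((\<Sum>k=1..n-1. 1 / sin (x k)) - (\<Sum>k=1..n-1. sin (x k)))"
    by (simp add: sum.distrib sum_subtractf sum_distrib_left right_diff_distrib)
  then show ?thesis
    using sum_sin_pi_div[OF n] by (simp add: x_def)
qed

lemma mod_less_double: "a < 2 * n \<Longrightarrow> a mod n = (if a < n then a else a - n)" for a n :: nat
  by (simp add: mod_if)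

lemma sum_other_vertices:
  fixes h :: "real \<Rightarrow> 'a::comm_monoid_add"
  assumes per: "\<And>\<phi>. h (\<phi> + 2*pi) = h \<phi>" and i: "i < n"
  shows "(\<Sum>b\<in>{..<n}-{i}. h (2*pi*real b/real n))
       = (\<Sum>k=1..n-1. h (2*pi*real i/real n + 2 * (pi*real k/real n)))"
proof (rule sum.reindex_bij_witness[where i = "\<lambda>k. (i + k) mod n" and j = "\<lambda>b. (b + n - i) mod n"])
  fix b assume b: "b \<in> {..<n}-{i}"
  show "(i + (b + n - i) mod n) mod n = b" "(b + n - i) mod n \<in> {1..n-1}"
    using b i by (auto simp: mod_less_double)
  have n: "real n > 0"
    using i by simp
  show "h (2*pi*real i/real n + 2 * (pi*real ((b + n - i) mod n)/real n)) = h (2*pi*real b/real n)"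
  proof (cases "i < b")
    case True
    then have "(b + n - i) mod n = b - i"
      using b by (auto simp: mod_less_double)
    then have "2*pi*real i/real n + 2 * (pi*real ((b + n - i) mod n)/real n) = 2*pi*real b/real n"
      using True n by (simp add: of_nat_diff field_simps)
    then show ?thesis by simp
  next
    case False
    then have "(b + n - i) mod n = b + n - i"
      using b i by (auto simp: mod_less_double)
    then have "2*pi*real i/real n + 2 * (pi*real ((b + n - i) mod n)/real n) = 2*pi*real b/real n + 2*pi"
      using False i n by (simp add: of_nat_diff field_simps)
    then show ?thesis by (simp add: per)
  qed
next
  fix k assume k: "k \<in> {1..n-1}"
  show "((i + k) mod n + n - i) mod n = k" "(i + k) mod n \<in> {..<n}-{i}"
    using k i by (auto simp: mod_less_double split: if_splits)
qed

lemma sum_other_vertices_chord_weights: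
  assumes n: "n \<ge> 2" and i: "i < n" and per: "\<And>\<phi>. h (\<phi> + 2*pi) = h \<phi>"
    and chord: "\<And>x. sin x > 0 \<Longrightarrow>
      h (2*pi*real i/real n + 2*x) = cos x * (P * cos (2*x) + Q * sin (2*x) + R) / sin x^2"
  shows "(\<Sum>b\<in>{..<n}-{i}. h (2*pi*real b/real n))
       = 2 * Q * ((\<Sum>k=1..n-1. 1 / sin (pi * real k / real n)) - sin (pi / real n) / (1 - cos (pi / real n)))"
proof -
  have "sin (pi * real k / real n) > 0" if "k \<in> {1..n-1}" for k
    using that n by (intro sin_gt_zero) (auto simp: field_simps)
  then have "(\<Sum>k=1..n-1. h (2*pi*real i/real n + 2 * (pi*real k/real n)))
      = (\<Sum>k=1..n-1. cos (pi * real k / real n) * (P * cos (2 * (pi * real k / real n))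
             + Q * sin (2 * (pi * real k / real n)) + R) / sin (pi * real k / real n)^2)"
    by (intro sum.cong refl chord)
  then show ?thesis
    using sum_other_vertices[of h, OF per i] sum_chord_weights[OF n] by simp
qed

section \<open>The regular polygon\<close>

definition regular_polygon :: "nat \<Rightarrow> real \<Rightarrow> (nat \<Rightarrow> real) \<Rightarrow> bool" where
  "regular_polygon n \<alpha> c \<longleftrightarrow>
     (\<forall>i<n. c i = \<alpha> * cos (2*pi*real i/real n) \<and> c (i+n) = \<alpha> * sin (2*pi*real i/real n))"

definition polygon_mode :: "nat \<Rightarrow> real \<Rightarrow> real \<Rightarrow> (nat \<Rightarrow> real) \<Rightarrow> bool" where
  "polygon_mode n A B v \<longleftrightarrow>
     (\<forall>i<n. v i = mode_x A B (2*pi*real i/real n) \<and> v (i+n) = mode_y A B (2*pi*real i/real n))"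

lemma regular_polygon_sqdist:
  assumes c: "regular_polygon n \<alpha> c" and a: "a < n" and b: "b < n"
  shows "sqdist n c a b = (2 * \<alpha> * sin (pi * (real a - real b) / real n))^2"
proof -
  have "sqdist n c a b = (\<alpha> * cos (2*pi*real a/real n) - \<alpha> * cos (2*pi*real b/real n))^2
                       + (\<alpha> * sin (2*pi*real a/real n) - \<alpha> * sin (2*pi*real b/real n))^2"
    using c a b by (simp add: regular_polygon_def sqdist_def)
  also have "\<dots> = (2 * \<alpha> * sin ((2*pi*real a/real n - 2*pi*real b/real n) / 2))^2"
    by (rule chord_sqdist)
  also have "(2*pi*real a/real n - 2*pi*real b/real n) / 2 = pi * (real a - real b) / real n"
    using a by (simp add: field_simps)
  finally show ?thesis .
qed

lemma regular_polygon_collision_free: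
  assumes c: "regular_polygon n \<alpha> c" and \<alpha>: "\<alpha> > 0"
  shows "collision_free n c"
proof -
  have pos: "sqdist n c a b > 0" if "b < a" "a < n" for a b
  proof -
    have "(real a - real b) / real n < 1"
      using that by (simp add: field_simps)
    then have "pi * ((real a - real b) / real n) < pi * 1"
      by (rule mult_strict_left_mono) simp
    then have "sin (pi * (real a - real b) / real n) > 0"
      using that by (intro sin_gt_zero) simp_all
    then show ?thesis
      using regular_polygon_sqdist[OF c, of a b] that \<alpha> by simp
  qed
  show ?thesis
    unfolding collision_free_def
    by (metis linorder_neqE_nat pos sqdist_commute)
qed

lemma regular_polygon_darboux:
  assumes n: "n \<ge> 2" and m: "m > 0" and \<alpha>: "\<alpha> > 0" and c: "regular_polygon n \<alpha> c"
    and darb: "darboux_point n m c"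
  shows "(\<Sum>k=1..n-1. 1 / sin (pi * real k / real n)) = 4 * \<alpha>^3 / m"
proof -
  have c0: "c 0 = \<alpha>"
    using c n by (simp add: regular_polygon_def)
  have summand: "(c 0 - c k) / sqrt (sqdist n c 0 k)^3 = 1 / (4 * \<alpha>^2) * (1 / sin (pi * real k / real n))"
    if "k \<in> {1..n-1}" for k
  proof -
    define x where "x = pi * real k / real n"
    have x: "sin x > 0"
      using that n by (auto intro!: sin_gt_zero simp: x_def field_simps)
    have k: "k < n"
      using that by auto
    then have "c k = \<alpha> * cos (2 * x)"
      using c by (simp add: regular_polygon_def x_def mult.assoc)
    then have "c 0 - c k = 2 * \<alpha> * sin x ^ 2"
      unfolding c0 cos_double_sin by (simp add: algebra_simps)
    moreover have "sqrt (sqdist n c 0 k) = 2 * \<alpha> * sin x"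
      using regular_polygon_sqdist[OF c _ k, of 0] k x \<alpha> by (simp add: x_def)
    ultimately show ?thesis
      using x \<alpha> by (simp add: x_def field_simps eval_nat_numeral)
  qed
  have "- m * \<alpha> = pdiff (0 + 0) (nbody_V n m) c"
    using darb n c0 by (simp add: darboux_point_def)
  also have "\<dots> = - (m*m) * (\<Sum>k=1..n-1. (c 0 - c k) / sqrt (sqdist n c 0 k)^3)"
  proof -
    have "{..<n} - {0} = {1..n-1}"
      using n by auto
    then show ?thesis
      using pdiff_nbody_V[OF regular_polygon_collision_free[OF c \<alpha>], of 0 0 m] n by simp
  qed
  also have "\<dots> = - (m*m) / (4 * \<alpha>^2) * (\<Sum>k=1..n-1. 1 / sin (pi * real k / real n))"
    by (simp add: summand sum_distrib_left)
  finally show ?thesis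
    using m \<alpha> by (simp add: field_simps power2_eq_square power3_eq_cube)
qed

lemma sum_inv_norm_hessian_regular_polygon:
  fixes n i :: nat and \<alpha> A B \<theta> :: real
  defines "S \<equiv> \<Sum>k=1..n-1. 1 / sin (pi * real k / real n)"
    and "T \<equiv> sin (pi / real n) / (1 - cos (pi / real n))"
  assumes n: "n \<ge> 2" and \<alpha>: "\<alpha> > 0" and i: "i < n" and \<theta>: "\<theta> = 2*pi*real i/real n"
  shows "(\<Sum>b\<in>{..<n}-{i}. inv_norm_hessian
            (\<alpha> * cos \<theta> - \<alpha> * cos (2*pi*real b/real n))
            (\<alpha> * sin \<theta> - \<alpha> * sin (2*pi*real b/real n))
            (mode_x A B \<theta> - mode_x A B (2*pi*real b/real n))
            (mode_y A B \<theta> - mode_y A B (2*pi*real b/real n)))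
         = mode_x A B \<theta> * (S - T) / (2 * \<alpha>^3)" (is "?s\<^sub>x = ?r\<^sub>x")
    and "(\<Sum>b\<in>{..<n}-{i}. inv_norm_hessian
            (\<alpha> * sin \<theta> - \<alpha> * sin (2*pi*real b/real n))
            (\<alpha> * cos \<theta> - \<alpha> * cos (2*pi*real b/real n))
            (mode_y A B \<theta> - mode_y A B (2*pi*real b/real n))
            (mode_x A B \<theta> - mode_x A B (2*pi*real b/real n)))
         = mode_y A B \<theta> * (S - T) / (2 * \<alpha>^3)" (is "?s\<^sub>y = ?r\<^sub>y")
proof -
  define h\<^sub>x where "h\<^sub>x \<phi> = inv_norm_hessian (\<alpha> * cos \<theta> - \<alpha> * cos \<phi>) (\<alpha> * sin \<theta> - \<alpha> * sin \<phi>)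
      (mode_x A B \<theta> - mode_x A B \<phi>) (mode_y A B \<theta> - mode_y A B \<phi>)" for \<phi>
  define h\<^sub>y where "h\<^sub>y \<phi> = inv_norm_hessian (\<alpha> * sin \<theta> - \<alpha> * sin \<phi>) (\<alpha> * cos \<theta> - \<alpha> * cos \<phi>)
      (mode_y A B \<theta> - mode_y A B \<phi>) (mode_x A B \<theta> - mode_x A B \<phi>)" for \<phi>
  have "(\<Sum>b\<in>{..<n}-{i}. h\<^sub>x (2*pi*real b/real n)) = 2 * (mode_x A B \<theta> / (4 * \<alpha>^3)) * (S - T)"
    unfolding S_def T_def
  proof (rule sum_other_vertices_chord_weights[OF n i])
    show "h\<^sub>x (\<phi> + 2*pi) = h\<^sub>x \<phi>" for \<phi>
      by (simp add: h\<^sub>x_def mode_periodic)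
    fix x :: real assume x: "sin x > 0"
    have "h\<^sub>x (2*pi*real i/real n + 2*x) = cos x
        * (mode_y A B \<theta> * cos (2*x) + mode_x A B \<theta> * sin (2*x) - 3 * B) / (4 * \<alpha>^3 * sin x ^ 2)"
      using inv_norm_hessian_polygon_pair(1)[OF \<alpha> x, of \<theta> A B]
      unfolding h\<^sub>x_def \<theta>[symmetric] mode_add .
    also have "\<dots> = cos x * (mode_y A B \<theta> / (4 * \<alpha>^3) * cos (2*x)
        + mode_x A B \<theta> / (4 * \<alpha>^3) * sin (2*x) + - 3 * B / (4 * \<alpha>^3)) / sin x^2"
      using \<alpha> x by (simp add: field_simps)
    finally show "h\<^sub>x (2*pi*real i/real n + 2*x) = \<dots>" .
  qed
  then show "?s\<^sub>x = ?r\<^sub>x"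
    using \<alpha> by (simp add: h\<^sub>x_def field_simps)
  have "(\<Sum>b\<in>{..<n}-{i}. h\<^sub>y (2*pi*real b/real n)) = 2 * (mode_y A B \<theta> / (4 * \<alpha>^3)) * (S - T)"
    unfolding S_def T_def
  proof (rule sum_other_vertices_chord_weights[OF n i])
    show "h\<^sub>y (\<phi> + 2*pi) = h\<^sub>y \<phi>" for \<phi>
      by (simp add: h\<^sub>y_def mode_periodic)
    fix x :: real assume x: "sin x > 0"
    have "h\<^sub>y (2*pi*real i/real n + 2*x) = - cos x
        * (mode_x A B \<theta> * cos (2*x) - mode_y A B \<theta> * sin (2*x) + 3 * A) / (4 * \<alpha>^3 * sin x ^ 2)"
      using inv_norm_hessian_polygon_pair(2)[OF \<alpha> x, of \<theta> A B]
      unfolding h\<^sub>y_def \<theta>[symmetric] mode_add .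
    also have "\<dots> = cos x * (- mode_x A B \<theta> / (4 * \<alpha>^3) * cos (2*x)
        + mode_y A B \<theta> / (4 * \<alpha>^3) * sin (2*x) + - 3 * A / (4 * \<alpha>^3)) / sin x^2"
      using \<alpha> x by (simp add: field_simps)
    finally show "h\<^sub>y (2*pi*real i/real n + 2*x) = \<dots>" .
  qed
  then show "?s\<^sub>y = ?r\<^sub>y"
    using \<alpha> by (simp add: h\<^sub>y_def field_simps)
qed

lemma matvec_Wmat_regular_polygon:
  fixes n :: nat and m \<alpha> A B :: real and c v :: "nat \<Rightarrow> real"
  defines "S \<equiv> \<Sum>k=1..n-1. 1 / sin (pi * real k / real n)"
    and "T \<equiv> sin (pi / real n) / (1 - cos (pi / real n))"
  assumes n: "n \<ge> 2" and \<alpha>: "\<alpha> > 0" and c: "regular_polygon n \<alpha> c" and v: "polygon_mode n A B v"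
    and k: "k < 2*n"
  shows "matvec (2*n) (Wmat n m c) v k = m * (S - T) / (2 * \<alpha>^3) * v k"
proof -
  have cf: "collision_free n c"
    by (rule regular_polygon_collision_free[OF c \<alpha>])
  have cv: "c b = \<alpha> * cos (2*pi*real b/real n)" "c (b+n) = \<alpha> * sin (2*pi*real b/real n)"
      "v b = mode_x A B (2*pi*real b/real n)" "v (b+n) = mode_y A B (2*pi*real b/real n)"
    if "b < n" for b
    using c v that by (simp_all add: regular_polygon_def polygon_mode_def)
  consider i where "i < n" "k = i + 0" | i where "i < n" "k = i + n"
    using k by (metis add.right_neutral le_add_diff_inverse2 less_diff_conv2 mult_2 not_le)
  then show ?thesis
  proof cases
    case (1 i)
    then show ?thesis
      using matvec_Wmat[OF cf \<open>i < n\<close>, where \<sigma> = 0 and \<tau> = n and m = m and v = v]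
        sum_inv_norm_hessian_regular_polygon(1)[OF n \<alpha> \<open>i < n\<close> refl, of A B]
      by (simp add: cv S_def T_def)
  next
    case (2 i)
    then show ?thesis
      using matvec_Wmat[OF cf \<open>i < n\<close>, where \<sigma> = n and \<tau> = 0 and m = m and v = v]
        sum_inv_norm_hessian_regular_polygon(2)[OF n \<alpha> \<open>i < n\<close> refl, of A B]
      by (simp add: cv S_def T_def insert_commute)
  qed
qed

lemma matvec_cong: "(\<And>l. l < d \<Longrightarrow> u l = w l) \<Longrightarrow> matvec d M u k = matvec d M w k"
  by (simp add: matvec_def)

lemma matvec_scale: "matvec d M (\<lambda>l. a * u l) k = a * matvec d M u k"
  by (simp add: matvec_def sum_distrib_left mult_ac)

lemma matvec_Jmat:
  assumes "k < 2*n"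
  shows "matvec (2*n) (Jmat n) u k = (if k < n then - u (k+n) else u (k-n))"
proof -
  have "matvec (2*n) (Jmat n) u k
      = (\<Sum>l<2*n. if l = (if k < n then k+n else k-n) then (if k < n then - u l else u l) else 0)"
    unfolding matvec_def Jmat_def using assms by (intro sum.cong refl) auto
  then show ?thesis
    using assms by auto
qed

lemma matvec_Jinv:
  assumes "k < 2*n"
  shows "matvec (2*n) (Jinv n) u k = (if k < n then u (k+n) else - u (k-n))"
proof -
  have "matvec (2*n) (Jinv n) u k
      = (\<Sum>l<2*n. if l = (if k < n then k+n else k-n) then (if k < n then u l else - u l) else 0)"
    unfolding matvec_def Jinv_def using assms by (intro sum.cong refl) auto
  then show ?thesis
    using assms by auto
qed

lemma matvec_Jinv_Jmat:
  assumes "k < 2*n"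
  shows "matvec (2*n) (Jinv n) (matvec (2*n) (Jmat n) u) k = u k"
  using assms by (cases "k < n") (auto simp: matvec_Jinv matvec_Jmat)

lemma polygon_mode_Jmat:
  assumes "polygon_mode n A B v"
  shows "polygon_mode n (- B) A (matvec (2*n) (Jmat n) v)"
  using assms by (simp add: polygon_mode_def matvec_Jmat mode_x_def mode_y_def)

theorem theorem14:
  fixes n :: nat and m \<alpha> lam :: real and c v :: "nat \<Rightarrow> real"
  assumes n2: "n \<ge> 2" and m_pos: "m > 0" and alpha_pos: "\<alpha> > 0"
    and c_def: "\<And>i. i < n \<Longrightarrow> c i = \<alpha> * cos (2 * pi * real i / real n)
                          \<and> c (i + n) = \<alpha> * sin (2 * pi * real i / real n)"
    and darb: "darboux_point n m c"
    and v_def: "\<And>i. i < n \<Longrightarrow> v i = cos (4 * pi * real i / real n)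
                          \<and> v (i + n) = sin (4 * pi * real i / real n)"
    and lam_def: "lam = 2 - (2 * sin (pi / real n) / (1 - cos (pi / real n)))
                        * inverse (\<Sum>j=1..n-1. 1 / sin (pi * real j / real n))"
  shows "(\<forall>k<2*n. matvec (2*n) (Wmat n m c) v k = lam * v k)
       \<and> (\<forall>k<2*n. matvec (2*n) (Jinv n) (matvec (2*n) (Wmat n m c) (matvec (2*n) (Jmat n) v)) k
                   = lam * v k)"
proof -
  have c: "regular_polygon n \<alpha> c"
    using c_def by (simp add: regular_polygon_def)
  have v: "polygon_mode n 1 0 v"
    using v_def by (simp add: polygon_mode_def mode_x_def mode_y_def mult.assoc[symmetric])
  have S: "(\<Sum>j=1..n-1. 1 / sin (pi * real j / real n)) = 4 * \<alpha>^3 / m"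
    by (rule regular_polygon_darboux[OF n2 m_pos alpha_pos c darb])
  define T where "T = sin (pi / real n) / (1 - cos (pi / real n))"
  have "2 * sin (pi / real n) / (1 - cos (pi / real n)) = 2 * T"
    by (simp add: T_def)
  then have lam: "lam = m * ((\<Sum>j=1..n-1. 1 / sin (pi * real j / real n)) - T) / (2 * \<alpha>^3)"
    unfolding lam_def S using m_pos alpha_pos by (simp add: field_simps)
  have eigen: "matvec (2*n) (Wmat n m c) u k = lam * u k" if "polygon_mode n A B u" "k < 2*n" for A B u k
    unfolding lam T_def by (rule matvec_Wmat_regular_polygon[OF n2 alpha_pos c that])
  have "matvec (2*n) (Jinv n) (matvec (2*n) (Wmat n m c) (matvec (2*n) (Jmat n) v)) k = lam * v k"
    if k: "k < 2*n" for k
  proof -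
    have "matvec (2*n) (Jinv n) (matvec (2*n) (Wmat n m c) (matvec (2*n) (Jmat n) v)) k
        = matvec (2*n) (Jinv n) (\<lambda>l. lam * matvec (2*n) (Jmat n) v l) k"
      by (rule matvec_cong) (rule eigen[OF polygon_mode_Jmat[OF v]])
    also have "\<dots> = lam * v k"
      by (simp add: matvec_scale matvec_Jinv_Jmat k)
    finally show ?thesis .
  qed
  then show ?thesis
    using eigen[OF v] by blast
qed

end
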